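(* Let $A$ be the set of $\alpha=(\alpha_0,\dots,\alpha_5)\in\mathbb{R}^6$ with $\alpha_0+\alpha_1=0$ and $\alpha_2+\alpha_3+\alpha_4+\alpha_5=1$. Let $G$ be the group acting on $A$ generated by the shifts \begin{align*} \sigma_1(\alpha)&=(\alpha_0+1,\alpha_1-1,\alpha_2,\alpha_3,\alpha_4,\alpha_5),\\ \sigma_2(\alpha)&=(\alpha_0,\alpha_1,\alpha_2+1,\alpha_3,\alpha_4,\alpha_5-1),\\ \sigma_3(\alpha)&=(\alpha_0,\alpha_1,\alpha_2,\alpha_3+1,\alpha_4,\alpha_5-1),\\ \sigma_4(\alpha)&=(\alpha_0,\alpha_1,\alpha_2,\alpha_3,\alpha_4+1,\alpha_5-1),\\ \sigma_5(\alpha)&=(\alpha_0+\tfrac12,\alpha_1-\tfrac12,\alpha_2+\tfrac12,\alpha_3+\tfrac12,\alpha_4-\tfrac12,\alpha_5-\tfrac12), \end{align*} by the permutations of $(\alpha_2,\alpha_3,\alpha_4,\alpha_5)$, and by the permutation exchanging $\alpha_0$ and $\alpha_1$. Then a fundamental domain for this action is the polytope \[ -\tfrac12\le\alpha_0\le0,\quad\alpha_1=-\alpha_0,\quad\alpha_2\le\alpha_3\le\alpha_4\le\alpha_5,\quad\alpha_4+\alpha_5\le1,\quad\alpha_2+\alpha_3+\alpha_4+\alpha_5=1. \] *)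

theory Defs
  imports "HOL-Analysis.Analysis" "HOL-Combinatorics.Permutations"
begin

definition setA :: "(real^6) set" where
  "setA = {a. a$0 + a$1 = 0 \<and> a$2 + a$3 + a$4 + a$5 = 1}"

definition sigma1 :: "real^6 \<Rightarrow> real^6" where
  "sigma1 a = (\<chi> i. if i = 0 then a$i + 1 else if i = 1 then a$i - 1 else a$i)"

definition sigma2 :: "real^6 \<Rightarrow> real^6" where
  "sigma2 a = (\<chi> i. if i = 2 then a$i + 1 else if i = 5 then a$i - 1 else a$i)"

definition sigma3 :: "real^6 \<Rightarrow> real^6" where
  "sigma3 a = (\<chi> i. if i = 3 then a$i + 1 else if i = 5 then a$i - 1 else a$i)"

definition sigma4 :: "real^6 \<Rightarrow> real^6" where
  "sigma4 a = (\<chi> i. if i = 4 then a$i + 1 else if i = 5 then a$i - 1 else a$i)"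

definition sigma5 :: "real^6 \<Rightarrow> real^6" where
  "sigma5 a = (\<chi> i. if i = 0 \<or> i = 2 \<or> i = 3 then a$i + 1/2 else a$i - 1/2)"

definition perm_coords :: "(6 \<Rightarrow> 6) \<Rightarrow> real^6 \<Rightarrow> real^6" where
  "perm_coords p a = (\<chi> i. a $ p i)"

definition swap01 :: "real^6 \<Rightarrow> real^6" where
  "swap01 a = (\<chi> i. if i = 0 then a$1 else if i = 1 then a$0 else a$i)"

definition generators :: "(real^6 \<Rightarrow> real^6) set" where
  "generators = {sigma1, sigma2, sigma3, sigma4, sigma5, swap01}
      \<union> {perm_coords p | p. p permutes {2,3,4,5}}"

text \<open>The group generated by the generators (all are bijections of R^6 preserving A),
  under composition.\<close>
inductive_set groupG :: "(real^6 \<Rightarrow> real^6) set" where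
  G_id: "id \<in> groupG"
| G_gen: "g \<in> groupG \<Longrightarrow> s \<in> generators \<Longrightarrow> s \<circ> g \<in> groupG"
| G_inv: "g \<in> groupG \<Longrightarrow> s \<in> generators \<Longrightarrow> inv s \<circ> g \<in> groupG"

definition interior_in :: "(real^6) set \<Rightarrow> (real^6) set \<Rightarrow> (real^6) set" where
  "interior_in X D = {x \<in> D. \<exists>e>0. ball x e \<inter> X \<subseteq> D}"

definition fundamental_domain ::
  "(real^6 \<Rightarrow> real^6) set \<Rightarrow> (real^6) set \<Rightarrow> (real^6) set \<Rightarrow> bool" where
  "fundamental_domain Gr X D \<longleftrightarrow>
     D \<subseteq> X \<and>
     (\<forall>x\<in>X. \<exists>g\<in>Gr. g x \<in> D) \<and>
     (\<forall>g\<in>Gr. \<forall>x\<in>interior_in X D. g x \<in> interior_in X D \<longrightarrow> g x = x)"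

definition polytopeD :: "(real^6) set" where
  "polytopeD = {a. -1/2 \<le> a$0 \<and> a$0 \<le> 0 \<and> a$1 = - a$0 \<and>
      a$2 \<le> a$3 \<and> a$3 \<le> a$4 \<and> a$4 \<le> a$5 \<and> a$4 + a$5 \<le> 1 \<and>
      a$2 + a$3 + a$4 + a$5 = 1}"

end

theory Submission
  imports Defs
begin

text \<open>Every orbit meets the polytope: translations in the group lower the pair sums
  \<open>\<alpha>2 + \<alpha>3\<close>, \<open>\<alpha>2 + \<alpha>4\<close>, \<open>\<alpha>2 + \<alpha>5\<close> independently by integers, so all six pair sums of
  \<open>\<alpha>2, \<dots>, \<alpha>5\<close> can be made nonnegative; sorting these coordinates then gives
  \<open>\<alpha>4 + \<alpha>5 = 1 - (\<alpha>2 + \<alpha>3) \<le> 1\<close>, and \<open>\<sigma>1\<close> together with the swap of \<open>\<alpha>0, \<alpha>1\<close> moves \<open>\<alpha>0\<close>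
  into \<open>[-1/2, 0]\<close>.

  Conversely, every group element acts on A as \<open>\<alpha>0 \<mapsto> \<plusminus>\<alpha>0 + m/2\<close> and on \<open>\<alpha>2, \<dots>, \<alpha>5\<close> as
  a permutation followed by a shift \<open>v\<close> with \<open>v i \<equiv> m/2 (mod 1)\<close> and \<open>\<Sum> v i = 0\<close>. If it maps an
  interior point to an interior point, the pair sums, which lie strictly between 0 and 1, force
  \<open>v = 0\<close> and \<open>m\<close> even; the strict inequalities then force \<open>\<alpha>0\<close> and the permuted
  coordinates to be fixed.\<close>

lemma exhaust_6:
  fixes i :: 6
  shows "i = 0 \<or> i = 1 \<or> i = 2 \<or> i = 3 \<or> i = 4 \<or> i = 5"
proof (induct i)
  case (of_int z)
  then have "z = 0 \<or> z = 1 \<or> z = 2 \<or> z = 3 \<or> z = 4 \<or> z = 5" by fastforce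
  then show ?case by auto
qed

lemma forall_6: "(\<forall>i::6. P i) \<longleftrightarrow> P 0 \<and> P 1 \<and> P 2 \<and> P 3 \<and> P 4 \<and> P 5"
  by (metis exhaust_6)

lemma vec6_eq_iff:
  "(x::'a^6) = y \<longleftrightarrow> x$0 = y$0 \<and> x$1 = y$1 \<and> x$2 = y$2 \<and> x$3 = y$3 \<and> x$4 = y$4 \<and> x$5 = y$5"
  by (simp add: vec_eq_iff forall_6)

lemma groupG_comp: "f \<in> groupG \<Longrightarrow> g \<in> groupG \<Longrightarrow> f \<circ> g \<in> groupG"
  by (induction f rule: groupG.induct) (simp_all add: comp_assoc groupG.intros)

lemma generator_in_groupG: "s \<in> generators \<Longrightarrow> s \<in> groupG"
  using groupG.G_gen[OF groupG.G_id] by simp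

lemma inv_generator_in_groupG: "s \<in> generators \<Longrightarrow> inv s \<in> groupG"
  using groupG.G_inv[OF groupG.G_id] by simp

definition translate :: "real^6 \<Rightarrow> real^6 \<Rightarrow> real^6" where
  "translate d x = x + d"

lemma translate_comp: "translate d \<circ> translate e = translate (d + e)"
  by (auto simp: translate_def fun_eq_iff algebra_simps)

lemma translate_0: "translate 0 = id"
  by (auto simp: translate_def)

lemma inv_translate: "inv (translate d) = translate (- d)"
  by (rule inv_equality) (auto simp: translate_def)

definition G_translations :: "(real^6) set" where
  "G_translations = {d. translate d \<in> groupG}"

lemma G_translations_add: "d \<in> G_translations \<Longrightarrow> e \<in> G_translations \<Longrightarrow> d + e \<in> G_translations"
  unfolding G_translations_def by (metis groupG_comp mem_Collect_eq translate_comp)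

lemma G_translations_of_nat_scaleR: "d \<in> G_translations \<Longrightarrow> of_nat k *\<^sub>R d \<in> G_translations"
proof (induction k)
  case 0
  then show ?case by (simp add: G_translations_def translate_0 groupG.G_id)
next
  case (Suc k)
  then show ?case using G_translations_add[of "of_nat k *\<^sub>R d" d] by (simp add: algebra_simps)
qed

lemma G_translations_of_int_scaleR:
  assumes "d \<in> G_translations" "- d \<in> G_translations"
  shows "of_int n *\<^sub>R d \<in> G_translations"
proof (cases n rule: int_cases)
  case (nonneg k)
  then show ?thesis using G_translations_of_nat_scaleR[OF assms(1), of k] by simp
next
  case (neg k)
  then have "of_int n *\<^sub>R d = of_nat (Suc k) *\<^sub>R (- d)"
    by (simp only: of_int_of_nat_eq of_int_minus scaleR_minus_left scaleR_minus_right)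
  then show ?thesis using G_translations_of_nat_scaleR[OF assms(2)] by metis
qed

definition shift1 :: "real^6" where
  "shift1 = (\<chi> i. if i = 0 then 1 else if i = 1 then -1 else 0)"

definition shift2 :: "real^6" where
  "shift2 = (\<chi> i. if i = 2 then 1 else if i = 5 then -1 else 0)"

definition shift3 :: "real^6" where
  "shift3 = (\<chi> i. if i = 3 then 1 else if i = 5 then -1 else 0)"

definition shift4 :: "real^6" where
  "shift4 = (\<chi> i. if i = 4 then 1 else if i = 5 then -1 else 0)"

definition shift5 :: "real^6" where
  "shift5 = (\<chi> i. if i = 0 \<or> i = 2 \<or> i = 3 then 1/2 else -1/2)"

lemma sigma_eq_translate:
  "sigma1 = translate shift1" "sigma2 = translate shift2" "sigma3 = translate shift3"
  "sigma4 = translate shift4" "sigma5 = translate shift5"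
  by (simp_all add: fun_eq_iff vec6_eq_iff translate_def sigma1_def sigma2_def sigma3_def
      sigma4_def sigma5_def shift1_def shift2_def shift3_def shift4_def shift5_def)

lemma shift_in_G_translations:
  assumes "d \<in> {shift1, shift2, shift3, shift4, shift5}"
  shows "d \<in> G_translations" "- d \<in> G_translations"
proof -
  have "translate d \<in> generators"
    using assms unfolding generators_def sigma_eq_translate by blast
  then show "d \<in> G_translations" "- d \<in> G_translations"
    unfolding G_translations_def
    using generator_in_groupG[of "translate d"] inv_generator_in_groupG[of "translate d"]
    by (simp_all add: inv_translate)
qed

definition pairwise_nonneg :: "real^6 \<Rightarrow> bool" where
  "pairwise_nonneg y \<longleftrightarrow> (\<forall>i\<in>{2,3,4,5}. \<forall>j\<in>{2,3,4,5}. i \<noteq> j \<longrightarrow> 0 \<le> y$i + y$j)"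

text \<open>The lattice vectors \<open>- shift5\<close>, \<open>shift3 - shift4 - shift5\<close>, \<open>shift3 - shift5\<close> lower
  \<open>x2 + x3\<close>, \<open>x2 + x4\<close>, \<open>x2 + x5\<close> respectively by 1 and fix the other two of these sums; the
  vector \<open>d\<close> below combines them with the floors of these sums. Once the three sums lie in
  \<open>[0, 1)\<close>, the remaining pair sums \<open>1 - (x2 + xj)\<close> lie in \<open>(0, 1]\<close>.\<close>
lemma translate_to_pairwise_nonneg:
  assumes x: "x \<in> setA"
  shows "\<exists>g\<in>groupG. g x \<in> setA \<and> pairwise_nonneg (g x)"
proof -
  define p where "p = \<lfloor>x$2 + x$3\<rfloor>"
  define q where "q = \<lfloor>x$2 + x$4\<rfloor>"
  define r where "r = \<lfloor>x$2 + x$5\<rfloor>"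
  define d where
    "d = of_int (q + r) *\<^sub>R shift3 + of_int (- q) *\<^sub>R shift4 + of_int (- p - q - r) *\<^sub>R shift5"
  have "d \<in> G_translations"
    unfolding d_def by (intro G_translations_add G_translations_of_int_scaleR shift_in_G_translations) simp_all
  then have g: "translate d \<in> groupG" by (simp add: G_translations_def)
  define y where "y = translate d x"
  have y: "y$0 = x$0 - (p + q + r)/2" "y$1 = x$1 + (p + q + r)/2"
    "y$2 = x$2 - (p + q + r)/2" "y$3 = x$3 + (- p + q + r)/2"
    "y$4 = x$4 + (p - q + r)/2" "y$5 = x$5 + (p + q - r)/2"
    unfolding y_def translate_def d_def by (simp_all add: shift3_def shift4_def shift5_def field_simps)
  have floors: "p \<le> x$2 + x$3" "x$2 + x$3 < p + 1" "q \<le> x$2 + x$4" "x$2 + x$4 < q + 1"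
    "r \<le> x$2 + x$5" "x$2 + x$5 < r + 1"
    unfolding p_def q_def r_def by linarith+
  have A: "x$0 + x$1 = 0" "x$2 + x$3 + x$4 + x$5 = 1" using x by (auto simp: setA_def)
  have "y \<in> setA" using A y unfolding setA_def by (simp add: field_simps)
  moreover have "pairwise_nonneg y"
    using floors A y unfolding pairwise_nonneg_def by (auto simp: field_simps)
  ultimately show ?thesis using g y_def by blast
qed

lemma perm_coords_in_groupG: "p permutes {2,3,4,5} \<Longrightarrow> perm_coords p \<in> groupG"
  by (intro generator_in_groupG) (auto simp: generators_def)

lemma perm_coords_setA:
  assumes p: "p permutes {2,3,4,5}" and y: "y \<in> setA"
  shows "perm_coords p y \<in> setA"
proof -
  have "(\<Sum>i\<in>{2,3,4,5}. y $ p i) = (\<Sum>i\<in>{2,3,4,5}. y $ i)"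
    using sum.permute[OF p, of "\<lambda>i. y $ i"] by (simp add: comp_def)
  moreover have "p 0 = 0" "p 1 = 1" using permutes_not_in[OF p] by simp_all
  ultimately show ?thesis using y by (simp add: setA_def perm_coords_def add.assoc)
qed

lemma perm_coords_pairwise_nonneg:
  assumes p: "p permutes {2,3,4,5}" and y: "pairwise_nonneg y"
  shows "pairwise_nonneg (perm_coords p y)"
  unfolding pairwise_nonneg_def perm_coords_def
proof (intro ballI impI)
  fix i j :: 6
  assume ij: "i \<in> {2,3,4,5}" "j \<in> {2,3,4,5}" "i \<noteq> j"
  then have "p i \<in> {2,3,4,5}" "p j \<in> {2,3,4,5}" "p i \<noteq> p j"
    using permutes_in_image[OF p] permutes_inj[OF p] by (auto simp: inj_eq)
  then have "0 \<le> y $ p i + y $ p j" using y unfolding pairwise_nonneg_def by blast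
  then show "0 \<le> (\<chi> k. y $ p k) $ i + (\<chi> k. y $ p k) $ j" by simp
qed

definition sort_pair :: "6 \<Rightarrow> 6 \<Rightarrow> real^6 \<Rightarrow> real^6" where
  "sort_pair i j y = (\<chi> k. if k = i then min (y$i) (y$j) else if k = j then max (y$i) (y$j) else y$k)"

lemma sort_pair_eq_perm_coords:
  assumes "i \<in> {2,3,4,5}" "j \<in> {2,3,4,5}" "i \<noteq> j"
  shows "\<exists>p. p permutes {2,3,4,5} \<and> sort_pair i j y = perm_coords p y"
proof (cases "y$i \<le> y$j")
  case True
  then have "sort_pair i j y = perm_coords id y"
    by (auto simp: vec_eq_iff sort_pair_def perm_coords_def)
  then show ?thesis using permutes_id by blast
next
  case False
  then have "sort_pair i j y = perm_coords (Transposition.transpose i j) y"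
    using assms(3) by (auto simp: vec_eq_iff sort_pair_def perm_coords_def transpose_def)
  then show ?thesis using assms by (blast intro: permutes_swap_id)
qed

text \<open>The composite of sort_pair steps below is a sorting network for four entries.\<close>
lemma sort_coords:
  assumes "y \<in> setA" "pairwise_nonneg y"
  shows "\<exists>g\<in>groupG. g y \<in> setA \<and> pairwise_nonneg (g y) \<and>
    g y $ 2 \<le> g y $ 3 \<and> g y $ 3 \<le> g y $ 4 \<and> g y $ 4 \<le> g y $ 5"
proof -
  define reach where "reach = {z. z \<in> setA \<and> pairwise_nonneg z \<and> (\<exists>g\<in>groupG. g y = z)}"
  have step: "sort_pair i j z \<in> reach"
    if z: "z \<in> reach" and ij: "i \<in> {2,3,4,5}" "j \<in> {2,3,4,5}" "i \<noteq> j" for i j z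
  proof -
    obtain p where p: "p permutes {2,3,4,5}" "sort_pair i j z = perm_coords p z"
      using sort_pair_eq_perm_coords ij by blast
    obtain g where "g \<in> groupG" "g y = z" using z reach_def by blast
    then have "perm_coords p \<circ> g \<in> groupG" "(perm_coords p \<circ> g) y = sort_pair i j z"
      using groupG_comp perm_coords_in_groupG p by auto
    moreover have "sort_pair i j z \<in> setA \<and> pairwise_nonneg (sort_pair i j z)"
      using z p unfolding reach_def by (auto intro: perm_coords_setA perm_coords_pairwise_nonneg)
    ultimately show ?thesis unfolding reach_def by blast
  qed
  define z where "z = sort_pair 3 4 (sort_pair 3 5 (sort_pair 2 4 (sort_pair 4 5 (sort_pair 2 3 y))))"
  have "y \<in> reach" using assms groupG.G_id unfolding reach_def by (auto intro!: bexI[of _ id])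
  then have "z \<in> reach" unfolding z_def by (intro step) simp_all
  moreover have "z $ 2 \<le> z $ 3 \<and> z $ 3 \<le> z $ 4 \<and> z $ 4 \<le> z $ 5"
    unfolding z_def by (simp add: sort_pair_def min_def max_def)
  ultimately show ?thesis unfolding reach_def by blast
qed

lemma normalize_first_coord:
  assumes y: "y \<in> setA"
  shows "\<exists>g\<in>groupG. g y \<in> setA \<and> -1/2 \<le> g y $ 0 \<and> g y $ 0 \<le> 0 \<and>
    (\<forall>i\<in>{2,3,4,5}. g y $ i = y $ i)"
proof -
  define n where "n = \<lfloor>1/2 - y$0\<rfloor>"
  define t where "t = translate (of_int n *\<^sub>R shift1)"
  have t_G: "t \<in> groupG"
    using G_translations_of_int_scaleR shift_in_G_translations unfolding t_def G_translations_def by simp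
  have t0: "t y $ 0 = y$0 + n" and t1: "t y $ 1 = - t y $ 0"
    and t_fix: "\<forall>i\<in>{2,3,4,5}. t y $ i = y $ i"
    using y by (auto simp: t_def translate_def shift1_def setA_def)
  have t_A: "t y \<in> setA" using y t1 t_fix by (simp add: setA_def)
  have "-1/2 < t y $ 0" "t y $ 0 \<le> 1/2" unfolding t0 n_def by linarith+
  show ?thesis
  proof (cases "t y $ 0 \<le> 0")
    case True
    then show ?thesis using t_G t_A t_fix \<open>-1/2 < t y $ 0\<close> by force
  next
    case False
    have "swap01 \<circ> t \<in> groupG"
      using groupG_comp generator_in_groupG t_G by (simp add: generators_def)
    moreover have "swap01 (t y) $ 0 = - t y $ 0" "swap01 (t y) $ 1 = t y $ 0"
      "\<forall>i\<in>{2,3,4,5}. swap01 (t y) $ i = t y $ i"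
      using t1 by (auto simp: swap01_def)
    ultimately show ?thesis
      using False t_A t_fix \<open>t y $ 0 \<le> 1/2\<close> by (auto simp: setA_def intro!: bexI[of _ "swap01 \<circ> t"])
  qed
qed

lemma groupG_orbit_meets_polytopeD:
  assumes x: "x \<in> setA"
  shows "\<exists>g\<in>groupG. g x \<in> polytopeD"
proof -
  obtain g1 where g1: "g1 \<in> groupG" "g1 x \<in> setA" "pairwise_nonneg (g1 x)"
    using translate_to_pairwise_nonneg[OF x] by blast
  obtain g2 where g2: "g2 \<in> groupG" "g2 (g1 x) \<in> setA" "pairwise_nonneg (g2 (g1 x))"
    "g2 (g1 x) $ 2 \<le> g2 (g1 x) $ 3" "g2 (g1 x) $ 3 \<le> g2 (g1 x) $ 4" "g2 (g1 x) $ 4 \<le> g2 (g1 x) $ 5"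
    using sort_coords[OF g1(2,3)] by blast
  define y where "y = g2 (g1 x)"
  obtain g3 where g3: "g3 \<in> groupG" "g3 y \<in> setA" "-1/2 \<le> g3 y $ 0" "g3 y $ 0 \<le> 0"
    "\<forall>i\<in>{2,3,4,5}. g3 y $ i = y $ i"
    using normalize_first_coord g2(2) unfolding y_def by blast
  have "0 \<le> y $ 2 + y $ 3" using g2(3) unfolding y_def pairwise_nonneg_def by simp
  then have "g3 y \<in> polytopeD"
    using g2(4-6) g3(2-5) unfolding y_def polytopeD_def setA_def by auto
  moreover have "g3 \<circ> g2 \<circ> g1 \<in> groupG" using g1 g2 g3 groupG_comp by blast
  ultimately show ?thesis unfolding y_def by (metis comp_apply)
qed

definition acts_on_setA_as ::
    "real \<Rightarrow> int \<Rightarrow> (6 \<Rightarrow> 6) \<Rightarrow> (6 \<Rightarrow> real) \<Rightarrow> (real^6 \<Rightarrow> real^6) \<Rightarrow> bool" where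
  "acts_on_setA_as e m w v g \<longleftrightarrow>
     (\<forall>x\<in>setA. g x $ 0 = e * x$0 + m/2 \<and> g x $ 1 = - (e * x$0 + m/2) \<and>
       (\<forall>i\<in>{2,3,4,5}. g x $ i = x $ w i + v i))"

definition normal_form_data :: "real \<Rightarrow> int \<Rightarrow> (6 \<Rightarrow> 6) \<Rightarrow> (6 \<Rightarrow> real) \<Rightarrow> bool" where
  "normal_form_data e m w v \<longleftrightarrow> (e = 1 \<or> e = -1) \<and> w permutes {2,3,4,5} \<and>
     (\<forall>i\<in>{2,3,4,5}. v i - m/2 \<in> \<int>) \<and> v 2 + v 3 + v 4 + v 5 = 0"

definition normal_form :: "(real^6 \<Rightarrow> real^6) \<Rightarrow> bool" where
  "normal_form g \<longleftrightarrow> (\<exists>e m w v. normal_form_data e m w v \<and> acts_on_setA_as e m w v g)"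

definition admissible_shift :: "real^6 \<Rightarrow> int \<Rightarrow> bool" where
  "admissible_shift d k \<longleftrightarrow> d$0 = k/2 \<and> d$1 = - (k/2) \<and>
     (\<forall>i\<in>{2,3,4,5}. d$i - k/2 \<in> \<int>) \<and> d$2 + d$3 + d$4 + d$5 = 0"

lemma admissible_shift_uminus:
  assumes "admissible_shift d k"
  shows "admissible_shift (- d) (- k)"
proof -
  have "- d$i - of_int (- k)/2 \<in> \<int>" if "i \<in> {2,3,4,5}" for i
  proof -
    have "d$i - k/2 \<in> \<int>" using assms that unfolding admissible_shift_def by blast
    moreover have "- d$i - of_int (- k)/2 = - (d$i - k/2)" by simp
    ultimately show ?thesis by (metis Ints_minus)
  qed
  then show ?thesis using assms unfolding admissible_shift_def by simp
qed

lemma admissible_shifts: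
  "admissible_shift shift1 2" "admissible_shift shift2 0" "admissible_shift shift3 0"
  "admissible_shift shift4 0" "admissible_shift shift5 1"
  by (simp_all add: admissible_shift_def shift1_def shift2_def shift3_def shift4_def shift5_def)

lemma normal_form_id: "normal_form id"
proof -
  have "normal_form_data 1 0 id (\<lambda>_. 0)" by (simp add: normal_form_data_def permutes_id)
  moreover have "acts_on_setA_as 1 0 id (\<lambda>_. 0) id" by (simp add: acts_on_setA_as_def setA_def)
  ultimately show ?thesis unfolding normal_form_def by blast
qed

lemma normal_form_translate:
  assumes g: "normal_form g" and d: "admissible_shift d k"
  shows "normal_form (translate d \<circ> g)"
proof -
  obtain e m w v where data: "normal_form_data e m w v" and act: "acts_on_setA_as e m w v g"
    using g unfolding normal_form_def by blast
  have "(v i + d$i) - of_int (m + k)/2 \<in> \<int>" if "i \<in> {2,3,4,5}" for i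
  proof -
    have "v i - m/2 \<in> \<int>" "d$i - k/2 \<in> \<int>"
      using data d that unfolding normal_form_data_def admissible_shift_def by blast+
    moreover have "(v i + d$i) - of_int (m + k)/2 = (v i - m/2) + (d$i - k/2)" by (simp add: field_simps)
    ultimately show ?thesis by (metis Ints_add)
  qed
  then have "normal_form_data e (m + k) w (\<lambda>i. v i + d$i)"
    using data d unfolding normal_form_data_def admissible_shift_def by simp
  moreover have "acts_on_setA_as e (m + k) w (\<lambda>i. v i + d$i) (translate d \<circ> g)"
    using act d unfolding acts_on_setA_as_def admissible_shift_def translate_def by (simp add: field_simps)
  ultimately show ?thesis unfolding normal_form_def by blast
qed

lemma normal_form_swap01:
  assumes g: "normal_form g"
  shows "normal_form (swap01 \<circ> g)"
proof -
  obtain e m w v where data: "normal_form_data e m w v" and act: "acts_on_setA_as e m w v g"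
    using g unfolding normal_form_def by blast
  have "v i - of_int (- m)/2 \<in> \<int>" if "i \<in> {2,3,4,5}" for i
  proof -
    have "v i - of_int (- m)/2 = (v i - m/2) + of_int m" by simp
    then show ?thesis using data that unfolding normal_form_data_def by (metis Ints_add Ints_of_int)
  qed
  then have "normal_form_data (- e) (- m) w v" using data unfolding normal_form_data_def by auto
  moreover have "acts_on_setA_as (- e) (- m) w v (swap01 \<circ> g)"
    using act unfolding acts_on_setA_as_def swap01_def by simp
  ultimately show ?thesis unfolding normal_form_def by blast
qed

lemma normal_form_perm_coords:
  assumes g: "normal_form g" and p: "p permutes {2,3,4,5}"
  shows "normal_form (perm_coords p \<circ> g)"
proof -
  obtain e m w v where data: "normal_form_data e m w v" and act: "acts_on_setA_as e m w v g"
    using g unfolding normal_form_def by blast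
  have p_in: "p i \<in> {2,3,4,5}" if "i \<in> {2,3,4,5}" for i
    using permutes_in_image[OF p] that by simp
  have p01: "p 0 = 0" "p 1 = 1" using permutes_not_in[OF p] by simp_all
  have "(\<Sum>i\<in>{2,3,4,5}. v (p i)) = (\<Sum>i\<in>{2,3,4,5}. v i)"
    using sum.permute[OF p, of v] by (simp add: comp_def)
  moreover have "v (p i) - m/2 \<in> \<int>" if "i \<in> {2,3,4,5}" for i
    using data p_in[OF that] unfolding normal_form_data_def by blast
  ultimately have "normal_form_data e m (w \<circ> p) (v \<circ> p)"
    using data permutes_compose[OF p] unfolding normal_form_data_def by (simp add: add.assoc)
  moreover have "acts_on_setA_as e m (w \<circ> p) (v \<circ> p) (perm_coords p \<circ> g)"
  proof -
    have "g x $ p i = x $ w (p i) + v (p i)" if "x \<in> setA" "i \<in> {2,3,4,5}" for x i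
      using act p_in[OF that(2)] that(1) unfolding acts_on_setA_as_def by blast
    then show ?thesis using act p01 unfolding acts_on_setA_as_def perm_coords_def by auto
  qed
  ultimately show ?thesis unfolding normal_form_def by blast
qed

lemma inv_swap01: "inv swap01 = swap01"
  by (rule inv_equality) (simp_all add: vec_eq_iff swap01_def)

lemma inv_perm_coords:
  assumes "p permutes S"
  shows "inv (perm_coords p) = perm_coords (inv p)"
  by (rule inv_equality) (simp_all add: vec_eq_iff perm_coords_def permutes_inverses[OF assms])

lemma normal_form_generator:
  assumes g: "normal_form g" and s: "s \<in> generators"
  shows "normal_form (s \<circ> g)" "normal_form (inv s \<circ> g)"
proof -
  have "normal_form (translate d \<circ> g) \<and> normal_form (translate (- d) \<circ> g)"
    if "admissible_shift d k" for d k
    using that normal_form_translate[OF g] admissible_shift_uminus by blast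
  then have shifts: "normal_form (s \<circ> g) \<and> normal_form (inv s \<circ> g)"
    if "s \<in> {sigma1, sigma2, sigma3, sigma4, sigma5}" for s
    using that admissible_shifts by (auto simp: sigma_eq_translate inv_translate)
  have "normal_form (perm_coords p \<circ> g) \<and> normal_form (inv (perm_coords p) \<circ> g)"
    if "p permutes {2,3,4,5}" for p
    using that normal_form_perm_coords[OF g] permutes_inv inv_perm_coords by metis
  then show "normal_form (s \<circ> g)" "normal_form (inv s \<circ> g)"
    using s shifts normal_form_swap01[OF g] inv_swap01 unfolding generators_def by auto
qed

lemma groupG_normal_form: "g \<in> groupG \<Longrightarrow> normal_form g"
  by (induction g rule: groupG.induct) (blast intro: normal_form_id normal_form_generator)+

lemma interior_polytopeD_perturb:
  assumes x: "x \<in> interior_in setA polytopeD" and u: "u$0 + u$1 = 0" "u$2 + u$3 + u$4 + u$5 = 0"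
  shows "\<exists>\<delta>>0. x + \<delta> *\<^sub>R u \<in> polytopeD"
proof -
  obtain e where e: "e > 0" "ball x e \<inter> setA \<subseteq> polytopeD" and "x \<in> polytopeD"
    using x unfolding interior_in_def by blast
  define \<delta> where "\<delta> = e / (norm u + 1)"
  have "0 < norm u + 1" by (simp add: add_nonneg_pos)
  then have "\<delta> > 0" using e(1) by (simp add: \<delta>_def)
  have "norm (\<delta> *\<^sub>R u) = e * (norm u / (norm u + 1))" using e(1) by (simp add: \<delta>_def)
  also have "\<dots> < e" using e(1) \<open>0 < norm u + 1\<close> by (simp add: field_simps)
  finally have "x + \<delta> *\<^sub>R u \<in> ball x e" by (simp add: dist_norm)
  moreover have "x + \<delta> *\<^sub>R u \<in> setA"
  proof -
    have "\<delta> * (u$0 + u$1) = 0" "\<delta> * (u$2 + u$3 + u$4 + u$5) = 0" using u by simp_all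
    then show ?thesis
      using \<open>x \<in> polytopeD\<close> unfolding polytopeD_def setA_def by (simp add: algebra_simps)
  qed
  ultimately show ?thesis using e(2) \<open>\<delta> > 0\<close> by blast
qed

lemma interior_polytopeD_strict:
  assumes x: "x \<in> interior_in setA polytopeD"
  shows "x \<in> setA \<and> -1/2 < x$0 \<and> x$0 < 0 \<and> x$2 < x$3 \<and> x$3 < x$4 \<and> x$4 < x$5 \<and> x$4 + x$5 < 1"
proof -
  have perturb: "\<exists>\<delta>>0. x + \<delta> *\<^sub>R (axis i 1 - axis j 1) \<in> polytopeD"
    if "(i = 0 \<and> j = 1) \<or> (i = 1 \<and> j = 0) \<or> (i \<in> {2,3,4,5} \<and> j \<in> {2,3,4,5})" for i j
    using that by (intro interior_polytopeD_perturb[OF x]) (auto simp: axis_def)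
  obtain d1 where "d1 > 0" "x + d1 *\<^sub>R (axis 1 1 - axis 0 1) \<in> polytopeD" using perturb by blast
  then have "-1/2 < x$0" unfolding polytopeD_def by (simp add: axis_def)
  obtain d2 where "d2 > 0" "x + d2 *\<^sub>R (axis 0 1 - axis 1 1) \<in> polytopeD" using perturb by blast
  then have "x$0 < 0" unfolding polytopeD_def by (simp add: axis_def)
  obtain d3 where "d3 > 0" "x + d3 *\<^sub>R (axis 2 1 - axis 3 1) \<in> polytopeD" using perturb by blast
  then have "x$2 < x$3" unfolding polytopeD_def by (simp add: axis_def)
  obtain d4 where "d4 > 0" "x + d4 *\<^sub>R (axis 3 1 - axis 4 1) \<in> polytopeD" using perturb by blast
  then have "x$3 < x$4" unfolding polytopeD_def by (simp add: axis_def)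
  obtain d5 where "d5 > 0" "x + d5 *\<^sub>R (axis 4 1 - axis 5 1) \<in> polytopeD" using perturb by blast
  then have "x$4 < x$5" unfolding polytopeD_def by (simp add: axis_def)
  obtain d6 where "d6 > 0" "x + d6 *\<^sub>R (axis 4 1 - axis 2 1) \<in> polytopeD" using perturb by blast
  then have "x$4 + x$5 < 1" unfolding polytopeD_def by (simp add: axis_def)
  moreover have "x \<in> setA" using x unfolding interior_in_def polytopeD_def setA_def by auto
  ultimately show ?thesis using \<open>-1/2 < x$0\<close> \<open>x$0 < 0\<close> \<open>x$2 < x$3\<close> \<open>x$3 < x$4\<close> \<open>x$4 < x$5\<close>
    by blast
qed

lemma strictly_sorted_pair_sums:
  fixes x :: "real^6"
  assumes "x$2 < x$3" "x$3 < x$4" "x$4 < x$5" "x$4 + x$5 < 1" "x$2 + x$3 + x$4 + x$5 = 1"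
    and "i \<in> {2,3,4,5}" "j \<in> {2,3,4,5}" "i \<noteq> j"
  shows "0 < x$i + x$j \<and> x$i + x$j < 1"
  using assms by auto

lemma permutes_strictly_sorted_coords:
  fixes x :: "real^6"
  assumes w: "w permutes {2,3,4,5}" and s: "x$2 < x$3" "x$3 < x$4" "x$4 < x$5"
    and ws: "x $ w 2 < x $ w 3" "x $ w 3 < x $ w 4" "x $ w 4 < x $ w 5"
  shows "\<forall>i\<in>{2,3,4,5}. x $ w i = x $ i"
proof -
  have "x $ w i \<in> {x$2, x$3, x$4, x$5}" if "i \<in> {2,3,4,5}" for i
  proof -
    have "w i \<in> {2,3,4,5}" using permutes_in_image[OF w] that by simp
    then show ?thesis by auto
  qed
  then have mem: "x $ w 2 \<in> {x$2, x$3, x$4, x$5}" "x $ w 3 \<in> {x$2, x$3, x$4, x$5}"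
    "x $ w 4 \<in> {x$2, x$3, x$4, x$5}" "x $ w 5 \<in> {x$2, x$3, x$4, x$5}" by simp_all
  have "x$2 \<le> x $ w 2" using mem(1) s by auto
  then have "x$3 \<le> x $ w 3" using mem(2) s ws by auto
  then have "x$4 \<le> x $ w 4" using mem(3) s ws by auto
  then have "x$5 \<le> x $ w 5" using mem(4) s ws by auto
  have "x $ w 5 \<le> x$5" using mem(4) s by auto
  then have "x $ w 4 \<le> x$4" using mem(3) s ws by auto
  then have "x $ w 3 \<le> x$3" using mem(2) s ws by auto
  then have "x $ w 2 \<le> x$2" using mem(1) s ws by auto
  show ?thesis using \<open>x$2 \<le> x $ w 2\<close> \<open>x$3 \<le> x $ w 3\<close> \<open>x$4 \<le> x $ w 4\<close> \<open>x$5 \<le> x $ w 5\<close>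
      \<open>x $ w 5 \<le> x$5\<close> \<open>x $ w 4 \<le> x$4\<close> \<open>x $ w 3 \<le> x$3\<close> \<open>x $ w 2 \<le> x$2\<close> by auto
qed

lemma interior_shift_vanishes:
  assumes data: "normal_form_data e m w v" and act: "acts_on_setA_as e m w v g"
    and x: "x \<in> interior_in setA polytopeD" and gx: "g x \<in> interior_in setA polytopeD"
  shows "\<forall>i\<in>{2,3,4,5}. v i = 0"
proof -
  have w: "w permutes {2,3,4,5}" and vsum: "v 2 + v 3 + v 4 + v 5 = 0"
    and half: "\<And>i. i \<in> {2,3,4,5} \<Longrightarrow> v i - m/2 \<in> \<int>"
    using data unfolding normal_form_data_def by auto
  note sx = interior_polytopeD_strict[OF x] and sy = interior_polytopeD_strict[OF gx]
  have gi: "\<And>i. i \<in> {2,3,4,5} \<Longrightarrow> g x $ i = x $ w i + v i"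
    using act sx unfolding acts_on_setA_as_def by auto
  txt \<open>The pair sums of an interior point lie in \<open>(0, 1)\<close>, and those of \<open>g x\<close> differ from
    pair sums of \<open>x\<close> by the integers \<open>v 2 + v j\<close>.\<close>
  have "v 2 + v j = 0" if j: "j \<in> {3,4,5}" for j
  proof (rule Ints_nonzero_abs_less1)
    have "v 2 - m/2 \<in> \<int>" "v j - m/2 \<in> \<int>" using half j by auto
    moreover have "v 2 + v j = (v 2 - m/2) + (v j - m/2) + of_int m" by simp
    ultimately show "v 2 + v j \<in> \<int>" by (metis Ints_add Ints_of_int)
    have "w 2 \<in> {2,3,4,5}" "w j \<in> {2,3,4,5}" "w 2 \<noteq> w j"
      using j permutes_in_image[OF w] permutes_inj[OF w] by (auto simp: inj_eq)
    then have "0 < x $ w 2 + x $ w j \<and> x $ w 2 + x $ w j < 1"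
      using strictly_sorted_pair_sums[of x "w 2" "w j"] sx unfolding setA_def by simp
    moreover have "0 < g x $ 2 + g x $ j \<and> g x $ 2 + g x $ j < 1"
      using strictly_sorted_pair_sums[of "g x" 2 j] sy j unfolding setA_def by auto
    ultimately show "\<bar>v 2 + v j\<bar> < 1" using gi[of 2] gi[of j] j by auto
  qed
  then have "v 2 + v 3 = 0" "v 2 + v 4 = 0" "v 2 + v 5 = 0" by simp_all
  then have "v 2 = 0" "v 3 = 0" "v 4 = 0" "v 5 = 0" using vsum by linarith+
  then show ?thesis by simp
qed

lemma groupG_fixes_interior:
  assumes g: "g \<in> groupG" and x: "x \<in> interior_in setA polytopeD"
    and gx: "g x \<in> interior_in setA polytopeD"
  shows "g x = x"
proof -
  obtain e m w v where data: "normal_form_data e m w v" and act: "acts_on_setA_as e m w v g"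
    using groupG_normal_form[OF g] unfolding normal_form_def by blast
  have w: "w permutes {2,3,4,5}" and e: "e = 1 \<or> e = -1"
    and half: "v 2 - m/2 \<in> \<int>"
    using data unfolding normal_form_data_def by auto
  have v0: "\<forall>i\<in>{2,3,4,5}. v i = 0" by (rule interior_shift_vanishes[OF data act x gx])
  note sx = interior_polytopeD_strict[OF x] and sy = interior_polytopeD_strict[OF gx]
  have g0: "g x $ 0 = e * x$0 + m/2" and gi: "\<forall>i\<in>{2,3,4,5}. g x $ i = x $ w i"
    using act sx v0 unfolding acts_on_setA_as_def by auto
  have "- (m/2) \<in> \<int>" using half v0 by simp
  then obtain k :: int where k: "m/2 = of_int k" by (metis Ints_cases minus_minus of_int_minus)
  have "e = 1 \<and> k = 0"
  proof (cases "e = 1")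
    case True
    then have "-1 < k" "k < 1" using g0 k sx sy by auto
    then show ?thesis using True by simp
  next
    case False
    then have "-1 < k" "k < 0" using e g0 k sx sy by auto
    then show ?thesis by simp
  qed
  then have "g x $ 0 = x $ 0" using g0 k by simp
  moreover have "\<forall>i\<in>{2,3,4,5}. x $ w i = x $ i"
    using permutes_strictly_sorted_coords[OF w] sx sy gi by simp
  ultimately show ?thesis
    using sx sy gi unfolding vec6_eq_iff setA_def by simp
qed

theorem lemma2p3:
  shows "fundamental_domain groupG setA polytopeD"
proof -
  have "polytopeD \<subseteq> setA" unfolding polytopeD_def setA_def by auto
  then show ?thesis
    unfolding fundamental_domain_def
    using groupG_orbit_meets_polytopeD groupG_fixes_interior by blast
qed

end
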